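(* Let $(X,d)$ be a uniformly convex geodesic metric space. Then every closed convex pair $(A,B)$ of subsets of $X$ has proximal normal structure.
   Context: A geodesic space is one in which any two points are joined by a geodesic segment; a subset is convex if it contains every geodesic segment joining two of its points. A point $m$ is a midpoint of $x,y$ if $d(x,m)=d(m,y)=d(x,y)/2$. $X$ is uniformly convex if for every $r>0$ and $\varepsilon\in(0,2]$ there is $\delta\in(0,1]$ such that for all $a,x,y\in X$ with $d(x,a)\le r$, $d(y,a)\le r$, $d(x,y)\ge\varepsilon r$, one has $d(m,a)\le(1-\delta)r$ for any midpoint $m$ of $x,y$. Notation: $\operatorname{dist}(A,B)=\inf\{d(x,y):x\in A,y\in B\}$, $\delta(x,A)=\sup\{d(x,y):y\in A\}$, $\delta(A,B)=\sup\{d(x,y):x\in A,y\in B\}$. A pair $(H_1,H_2)$ is proximal if for every $(a,b)\in H_1\times H_2$ there is $(a',b')\in H_1\times H_2$ with $d(a,b')=d(a',b)=\operatorname{dist}(H_1,H_2)$. A convex pair $(K_1,K_2)$ has proximal normal structure if for every closed bounded convex proximal pair $(H_1,H_2)$ with $H_1\subseteq K_1$, $H_2\subseteq K_2$, $\operatorname{dist}(H_1,H_2)=\operatorname{dist}(K_1,K_2)$ and $\delta(H_1,H_2)>\operatorname{dist}(H_1,H_2)$, there exists $(x_1,x_2)\in H_1\times H_2$ with $\delta(x_1,H_2)<\delta(H_1,H_2)$ and $\delta(x_2,H_1)<\delta(H_1,H_2)$. *)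

theory Defs
  imports "HOL-Analysis.Analysis"
begin

definition geodesic_segment :: "'a::metric_space \<Rightarrow> 'a \<Rightarrow> 'a set \<Rightarrow> bool" where
  "geodesic_segment x y S \<longleftrightarrow>
     (\<exists>g :: real \<Rightarrow> 'a. g 0 = x \<and> g (dist x y) = y \<and>
        (\<forall>s\<in>{0..dist x y}. \<forall>t\<in>{0..dist x y}. dist (g s) (g t) = \<bar>s - t\<bar>) \<and>
        S = g ` {0..dist x y})"

definition geodesic_space :: "'a::metric_space itself \<Rightarrow> bool" where
  "geodesic_space _ \<longleftrightarrow> (\<forall>x y :: 'a. \<exists>S. geodesic_segment x y S)"

definition gconvex :: "'a::metric_space set \<Rightarrow> bool" where
  "gconvex A \<longleftrightarrow> (\<forall>x\<in>A. \<forall>y\<in>A. \<forall>S. geodesic_segment x y S \<longrightarrow> S \<subseteq> A)"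

definition is_midpoint :: "'a::metric_space \<Rightarrow> 'a \<Rightarrow> 'a \<Rightarrow> bool" where
  "is_midpoint x y m \<longleftrightarrow> dist x m = dist x y / 2 \<and> dist m y = dist x y / 2"

definition uniformly_convex :: "'a::metric_space itself \<Rightarrow> bool" where
  "uniformly_convex _ \<longleftrightarrow>
     (\<forall>r>0. \<forall>\<epsilon>. 0 < \<epsilon> \<and> \<epsilon> \<le> 2 \<longrightarrow>
        (\<exists>\<delta>. 0 < \<delta> \<and> \<delta> \<le> 1 \<and>
           (\<forall>a x y m :: 'a. dist x a \<le> r \<and> dist y a \<le> r \<and> dist x y \<ge> \<epsilon> * r
               \<and> is_midpoint x y m \<longrightarrow> dist m a \<le> (1 - \<delta>) * r)))"

definition dist_set :: "'a::metric_space set \<Rightarrow> 'a set \<Rightarrow> real" where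
  "dist_set A B = Inf {dist x y | x y. x \<in> A \<and> y \<in> B}"

definition diam_pt :: "'a::metric_space \<Rightarrow> 'a set \<Rightarrow> real" where
  "diam_pt x A = Sup {dist x y | y. y \<in> A}"

definition diam_sets :: "'a::metric_space set \<Rightarrow> 'a set \<Rightarrow> real" where
  "diam_sets A B = Sup {dist x y | x y. x \<in> A \<and> y \<in> B}"

definition proximal_pair :: "'a::metric_space set \<Rightarrow> 'a set \<Rightarrow> bool" where
  "proximal_pair H1 H2 \<longleftrightarrow>
     (\<forall>a\<in>H1. \<forall>b\<in>H2. \<exists>a'\<in>H1. \<exists>b'\<in>H2.
        dist a b' = dist_set H1 H2 \<and> dist a' b = dist_set H1 H2)"

definition proximal_normal_structure :: "'a::metric_space set \<Rightarrow> 'a set \<Rightarrow> bool" where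
  "proximal_normal_structure K1 K2 \<longleftrightarrow>
     (\<forall>H1 H2. H1 \<noteq> {} \<and> H2 \<noteq> {} \<and> closed H1 \<and> closed H2 \<and> bounded H1 \<and> bounded H2
        \<and> gconvex H1 \<and> gconvex H2 \<and> proximal_pair H1 H2
        \<and> H1 \<subseteq> K1 \<and> H2 \<subseteq> K2 \<and> dist_set H1 H2 = dist_set K1 K2
        \<and> diam_sets H1 H2 > dist_set H1 H2
        \<longrightarrow> (\<exists>x1\<in>H1. \<exists>x2\<in>H2. diam_pt x1 H2 < diam_sets H1 H2 \<and> diam_pt x2 H1 < diam_sets H1 H2))"

end

theory Submission
  imports Defs
begin

text \<open>Under the hypotheses the pair \<open>(H\<^sub>1, H\<^sub>2)\<close> cannot have a singleton side: by
  proximality all distances to a single point would equal \<open>dist(H\<^sub>1, H\<^sub>2)\<close>, so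
  \<open>\<delta>(H\<^sub>1, H\<^sub>2) = dist(H\<^sub>1, H\<^sub>2)\<close>. Hence \<open>H\<^sub>1\<close> contains two distinct points \<open>x, y\<close>. With
  \<open>D = \<delta>(H\<^sub>1, H\<^sub>2) > 0\<close>, every point of \<open>H\<^sub>2\<close> lies within \<open>D\<close> of \<open>x\<close> and \<open>y\<close>, and
  \<open>d(x, y) \<ge> \<epsilon> D\<close> for a fixed \<open>\<epsilon> > 0\<close>; uniform convexity then puts the geodesic midpoint
  of \<open>x, y\<close>, which lies in the convex set \<open>H\<^sub>1\<close>, within \<open>(1 - \<delta>) D\<close> of all of \<open>H\<^sub>2\<close>.
  The same argument with the roles exchanged handles \<open>H\<^sub>2\<close>.\<close>

lemma dist_set_commute: "dist_set A B = dist_set B A"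
  unfolding dist_set_def by (metis (no_types, lifting) dist_commute)

lemma diam_sets_commute: "diam_sets A B = diam_sets B A"
  unfolding diam_sets_def by (metis (no_types, lifting) dist_commute)

lemma proximal_pair_commute: "proximal_pair A B \<longleftrightarrow> proximal_pair B A"
  unfolding proximal_pair_def dist_set_commute[of A B] by (simp add: dist_commute) blast

lemma dist_set_nonneg:
  assumes "A \<noteq> {}" "B \<noteq> {}"
  shows "dist_set A B \<ge> 0"
  unfolding dist_set_def using assms by (intro cInf_greatest) auto

lemma dist_le_diam_sets:
  assumes "bounded A" "bounded B" "x \<in> A" "y \<in> B"
  shows "dist x y \<le> diam_sets A B"
proof -
  obtain a e where e: "\<forall>u\<in>A. dist a u \<le> e" using assms(1) unfolding bounded_def by blast
  obtain b f where f: "\<forall>v\<in>B. dist b v \<le> f" using assms(2) unfolding bounded_def by blast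
  have "dist u v \<le> e + dist a b + f" if "u \<in> A" "v \<in> B" for u v
  proof -
    have "dist u v \<le> dist u a + dist a b + dist b v"
      by (metis add_right_mono dist_triangle order_trans)
    moreover have "dist a u \<le> e" "dist b v \<le> f" using e f that by blast+
    ultimately show ?thesis using dist_commute[of u a] by linarith
  qed
  then have "bdd_above {dist u v | u v. u \<in> A \<and> v \<in> B}"
    unfolding bdd_above_def by blast
  then show ?thesis
    unfolding diam_sets_def using assms(3,4) by (auto intro: cSup_upper)
qed

lemma diam_pt_le:
  assumes "K \<noteq> {}" "\<And>z. z \<in> K \<Longrightarrow> dist m z \<le> c"
  shows "diam_pt m K \<le> c"
  unfolding diam_pt_def using assms by (intro cSup_least) auto

lemma diam_sets_singleton_proximal:
  assumes "proximal_pair {a} B" "B \<noteq> {}"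
  shows "diam_sets {a} B = dist_set {a} B"
proof -
  have dists: "dist a b = dist_set {a} B" if "b \<in> B" for b
    using assms(1) that unfolding proximal_pair_def by auto
  have "{dist x y | x y. x \<in> {a} \<and> y \<in> B} = (\<lambda>b. dist a b) ` B" by auto
  also have "\<dots> = {dist_set {a} B}" using dists assms(2) by auto
  finally show ?thesis unfolding diam_sets_def by simp
qed

lemma proximal_pair_two_points:
  assumes "proximal_pair A B" "A \<noteq> {}" "B \<noteq> {}" "dist_set A B < diam_sets A B"
  obtains x y where "x \<in> A" "y \<in> A" "x \<noteq> y"
proof -
  obtain a where a: "a \<in> A" using assms(2) by blast
  have "A \<noteq> {a}"
  proof
    assume "A = {a}"
    then show False using diam_sets_singleton_proximal[of a B] assms(1,3,4) by simp
  qed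
  then show ?thesis using a that by blast
qed

lemma geodesic_segment_midpoint:
  assumes "geodesic_segment x y S"
  shows "\<exists>m\<in>S. is_midpoint x y m"
proof -
  obtain g where g: "g 0 = x" "g (dist x y) = y"
    "\<forall>s\<in>{0..dist x y}. \<forall>t\<in>{0..dist x y}. dist (g s) (g t) = \<bar>s - t\<bar>" "S = g ` {0..dist x y}"
    using assms unfolding geodesic_segment_def by blast
  define m where "m = g (dist x y / 2)"
  have "dist x m = \<bar>0 - dist x y / 2\<bar>"
    using g(3)[rule_format, of 0 "dist x y / 2"] g(1) unfolding m_def by simp
  moreover have "dist m y = \<bar>dist x y / 2 - dist x y\<bar>"
    using g(3)[rule_format, of "dist x y / 2" "dist x y"] g(2) unfolding m_def by simp
  moreover have "m \<in> S" unfolding m_def g(4) by auto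
  ultimately show ?thesis unfolding is_midpoint_def by auto
qed

lemma gconvex_midpoint:
  fixes H :: "'a::metric_space set"
  assumes "geodesic_space TYPE('a)" "gconvex H" "x \<in> H" "y \<in> H"
  obtains m where "m \<in> H" "is_midpoint x y m"
proof -
  obtain S where S: "geodesic_segment x y S" using assms(1) unfolding geodesic_space_def by blast
  then have "S \<subseteq> H" using assms(2-4) unfolding gconvex_def by blast
  then show ?thesis using geodesic_segment_midpoint[OF S] that by blast
qed

lemma uniformly_convex_midpoint_closer:
  fixes x y :: "'a::metric_space"
  assumes "uniformly_convex TYPE('a)" "r > 0" "x \<noteq> y"
  obtains \<delta> where "0 < \<delta>"
    "\<And>a m. dist x a \<le> r \<Longrightarrow> dist y a \<le> r \<Longrightarrow> is_midpoint x y m \<Longrightarrow> dist m a \<le> (1 - \<delta>) * r"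
proof -
  define \<epsilon> where "\<epsilon> = min (dist x y / r) 2"
  have \<epsilon>: "0 < \<epsilon>" "\<epsilon> \<le> 2" using assms(2,3) unfolding \<epsilon>_def by auto
  have "\<epsilon> * r \<le> dist x y / r * r" unfolding \<epsilon>_def using assms(2) by (intro mult_right_mono) auto
  then have sep: "\<epsilon> * r \<le> dist x y" using assms(2) by simp
  obtain \<delta> where "0 < \<delta>" and closer: "\<And>a x y m :: 'a. dist x a \<le> r \<Longrightarrow> dist y a \<le> r
      \<Longrightarrow> dist x y \<ge> \<epsilon> * r \<Longrightarrow> is_midpoint x y m \<Longrightarrow> dist m a \<le> (1 - \<delta>) * r"
    using assms(1)[unfolded uniformly_convex_def, rule_format, of r \<epsilon>] assms(2) \<epsilon> by auto
  show ?thesis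
  proof (rule that[OF \<open>0 < \<delta>\<close>])
    fix a m assume "dist x a \<le> r" "dist y a \<le> r" "is_midpoint x y m"
    then show "dist m a \<le> (1 - \<delta>) * r" using closer sep by blast
  qed
qed

lemma exists_diam_pt_less_diam_sets:
  fixes A B :: "'a::metric_space set"
  assumes "geodesic_space TYPE('a)" "uniformly_convex TYPE('a)"
    and "gconvex A" "bounded A" "bounded B" "A \<noteq> {}" "B \<noteq> {}"
    and "proximal_pair A B" "dist_set A B < diam_sets A B"
  shows "\<exists>m\<in>A. diam_pt m B < diam_sets A B"
proof -
  define D where "D = diam_sets A B"
  have "D > 0" using dist_set_nonneg[OF assms(6,7)] assms(9) unfolding D_def by linarith
  obtain x y where xy: "x \<in> A" "y \<in> A" "x \<noteq> y"
    by (rule proximal_pair_two_points[OF assms(8,6,7,9)])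
  obtain m where m: "m \<in> A" "is_midpoint x y m"
    by (rule gconvex_midpoint[OF assms(1,3) xy(1,2)])
  obtain \<delta> where \<delta>: "0 < \<delta>"
    "\<And>a m. dist x a \<le> D \<Longrightarrow> dist y a \<le> D \<Longrightarrow> is_midpoint x y m \<Longrightarrow> dist m a \<le> (1 - \<delta>) * D"
    using uniformly_convex_midpoint_closer[OF assms(2) \<open>D > 0\<close> xy(3)] by blast
  have "dist m z \<le> (1 - \<delta>) * D" if "z \<in> B" for z
    using \<delta>(2)[OF _ _ m(2)] dist_le_diam_sets[OF assms(4,5) xy(1) that]
      dist_le_diam_sets[OF assms(4,5) xy(2) that]
    unfolding D_def by blast
  then have "diam_pt m B \<le> (1 - \<delta>) * D" by (rule diam_pt_le[OF assms(7)])
  also have "\<dots> < D" using \<delta>(1) \<open>D > 0\<close> by simp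
  finally show ?thesis using m(1) unfolding D_def by blast
qed

theorem mainTheorem4:
  fixes A B :: "'a::metric_space set"
  assumes "geodesic_space TYPE('a)"
    and "uniformly_convex TYPE('a)"
    and "closed A" and "closed B" and "gconvex A" and "gconvex B"
  shows "proximal_normal_structure A B"
  unfolding proximal_normal_structure_def
proof (intro allI impI)
  fix H1 H2 :: "'a set"
  assume "H1 \<noteq> {} \<and> H2 \<noteq> {} \<and> closed H1 \<and> closed H2 \<and> bounded H1 \<and> bounded H2
        \<and> gconvex H1 \<and> gconvex H2 \<and> proximal_pair H1 H2
        \<and> H1 \<subseteq> A \<and> H2 \<subseteq> B \<and> dist_set H1 H2 = dist_set A B
        \<and> diam_sets H1 H2 > dist_set H1 H2"
  then have ne: "H1 \<noteq> {}" "H2 \<noteq> {}" and bd: "bounded H1" "bounded H2"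
    and cv: "gconvex H1" "gconvex H2" and pp: "proximal_pair H1 H2"
    and gap: "dist_set H1 H2 < diam_sets H1 H2" by auto
  obtain x1 where "x1 \<in> H1" "diam_pt x1 H2 < diam_sets H1 H2"
    using exists_diam_pt_less_diam_sets[OF assms(1,2) cv(1) bd ne pp gap] by blast
  moreover obtain x2 where "x2 \<in> H2" "diam_pt x2 H1 < diam_sets H1 H2"
    using exists_diam_pt_less_diam_sets[OF assms(1,2) cv(2) bd(2,1) ne(2,1)]
      pp gap proximal_pair_commute[of H1 H2] dist_set_commute[of H1 H2] diam_sets_commute[of H1 H2]
    by auto
  ultimately show "\<exists>x1\<in>H1. \<exists>x2\<in>H2. diam_pt x1 H2 < diam_sets H1 H2 \<and> diam_pt x2 H1 < diam_sets H1 H2"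
    by blast
qed

end
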